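(* Let $k\ge 1$ and let $T$ be an array whose positions $0,\dots,2k-1$ hold $n=2k$ elements, the first $k$ forming one list and the last $k$ another. Run $\textsc{Merge}(T,0,k,k)$ (defined in the context). Then the expected number of random bits it consumes to produce the merged array of size $n$ is $n+\Theta(\sqrt{n}\log n)$ as $n\to\infty$.
   Context: The procedure $\textsc{Merge}(T,s,n_1,n_2)$: set $i\gets s$, $j\gets s+n_1$, $n\gets s+n_1+n_2$. Repeat: draw an independent fair random bit; if it is $0$, then break out of the loop if $i=j$; if it is $1$, then break out of the loop if $j=n$, and otherwise swap $T[i]$ and $T[j]$ and set $j\gets j+1$; in either non-breaking case set $i\gets i+1$. After the loop, while $i<n$: draw an integer $m$ uniformly at random from $\{s,\dots,i\}$ (independently of everything else), swap $T[i]$ and $T[m]$, and set $i\gets i+1$. Cost model: each fair bit drawn in the first loop costs one random bit, and drawing a uniform integer from a set of $K$ elements costs $\lceil \log_2 K\rceil$ random bits. *)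

theory Defs
  imports "HOL-Probability.Probability" "HOL-Library.Landau_Symbols"
begin

definition swap :: "'a list \<Rightarrow> nat \<Rightarrow> nat \<Rightarrow> 'a list" where
  "swap T a b = T[a := T ! b, b := T ! a]"

text \<open>Cost of drawing a uniform integer from a set of K elements.\<close>
definition unif_cost :: "nat \<Rightarrow> nat" where
  "unif_cost K = nat \<lceil>log 2 (real K)\<rceil>"

text \<open>Returns (array, final i, number of bits drawn).
  Breaking tests are written "j \<le> i" (for i = j) and "n \<le> j" (for j = n);
  these coincide with the original tests under the loop invariant i \<le> j \<le> n.\<close>
function merge_loop1 :: "'a list \<Rightarrow> nat \<Rightarrow> nat \<Rightarrow> nat \<Rightarrow> ('a list \<times> nat \<times> nat) pmf" where
  "merge_loop1 T i j n =
     do { b \<leftarrow> bernoulli_pmf (1 / 2);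
          if \<not> b then
            (if j \<le> i then return_pmf (T, i, 1)
             else map_pmf (\<lambda>(T', i', c). (T', i', c + 1)) (merge_loop1 T (i + 1) j n))
          else
            (if n \<le> j then return_pmf (T, i, 1)
             else map_pmf (\<lambda>(T', i', c). (T', i', c + 1)) (merge_loop1 (swap T i j) (i + 1) (j + 1) n)) }"
  by pat_completeness auto
termination
  by (relation "Wellfounded.measure (\<lambda>(T, i, j, n). (j - i) + (n - j))") auto

function merge_loop2 :: "'a list \<Rightarrow> nat \<Rightarrow> nat \<Rightarrow> nat \<Rightarrow> ('a list \<times> nat) pmf" where
  "merge_loop2 T s i n =
     (if i < n then
        do { m \<leftarrow> pmf_of_set {s..i};
             map_pmf (\<lambda>(T', c). (T', c + unif_cost (card {s..i})))
               (merge_loop2 (swap T i m) s (i + 1) n) }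
      else return_pmf (T, 0))"
  by pat_completeness auto
termination
  by (relation "Wellfounded.measure (\<lambda>(T, s, i, n). n - i)") auto

definition merge :: "'a list \<Rightarrow> nat \<Rightarrow> nat \<Rightarrow> nat \<Rightarrow> ('a list \<times> nat) pmf" where
  "merge T s n1 n2 =
     do { (T1, i, c1) \<leftarrow> merge_loop1 T s (s + n1) (s + n1 + n2);
          (T2, c2) \<leftarrow> merge_loop2 T1 s i (s + n1 + n2);
          return_pmf (T2, c1 + c2) }"

definition expected_bits :: "'a list \<Rightarrow> nat \<Rightarrow> nat \<Rightarrow> nat \<Rightarrow> real" where
  "expected_bits T s n1 n2 = measure_pmf.expectation (merge T s n1 n2) (\<lambda>(T', c). real c)"

end

theory Submission
  imports Defs "HOL-Real_Asymp.Real_Asymp"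
begin

text \<open>
  The bits used by Merge depend only on the number \<open>d\<close> of elements still unplaced when the first
  loop stops: that loop draws \<open>n - d + 1\<close> bits and the second loop draws \<open>\<lceil>log\<^sub>2 t\<rceil>\<close> bits for
  \<open>t = n - d + 1, \<dots>, n\<close>, i.e. \<open>d \<cdot> \<Theta>(log n)\<close> bits since \<open>d \<le> k\<close>. So the excess over \<open>n\<close> is
  \<open>1 + E[d] \<cdot> \<Theta>(log n)\<close>, and it remains to show \<open>E[d] = \<Theta>(\<surd>k)\<close>. The one-step recursion of the
  underlying random walk gives \<open>E[d\<^sup>2] = 2k - 3 E[d]\<close> and \<open>E[d\<^sup>4] \<le> 12 k\<^sup>2\<close>; comparing \<open>d\<close> pointwise
  with a quadratic and a quartic polynomial in \<open>d\<close> turns these into matching bounds on \<open>E[d]\<close>.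
\<close>

text \<open>
  \<open>leftover u v\<close> is the number of elements still unplaced when the first loop of Merge stops,
  started with \<open>u = j - i\<close> elements left in the first run and \<open>v = n - j\<close> in the second.
\<close>

function leftover :: "nat \<Rightarrow> nat \<Rightarrow> nat pmf" where
  "leftover u v =
     do { b \<leftarrow> bernoulli_pmf (1 / 2);
          if \<not> b then (if u = 0 then return_pmf (u + v) else leftover (u - 1) v)
          else (if v = 0 then return_pmf (u + v) else leftover u (v - 1)) }"
  by pat_completeness auto
termination
  by (relation "Wellfounded.measure (\<lambda>(u, v). u + v)") auto

declare leftover.simps [simp del] merge_loop1.simps [simp del] merge_loop2.simps [simp del]

lemma set_pmf_leftover: "d \<in> set_pmf (leftover u v) \<Longrightarrow> d \<le> max u v"
proof (induction u v rule: leftover.induct)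
  case (1 u v)
  show ?case
    using "1.prems" "1.IH"[of False] "1.IH"[of True]
    by (subst (asm) leftover.simps) (auto split: if_splits)
qed

lemma finite_set_pmf_leftover [simp]: "finite (set_pmf (leftover u v))"
  by (rule finite_subset[of _ "{..max u v}"]) (auto dest: set_pmf_leftover)

lemma integrable_leftover [simp]:
  fixes f :: "nat \<Rightarrow> real"
  shows "integrable (measure_pmf (leftover u v)) f"
  by (simp add: integrable_measure_pmf_finite)

lemma expectation_leftover:
  fixes f :: "nat \<Rightarrow> real"
  shows "measure_pmf.expectation (leftover u v) f =
     (if u = 0 then f (u + v) else measure_pmf.expectation (leftover (u - 1) v) f) / 2 +
     (if v = 0 then f (u + v) else measure_pmf.expectation (leftover u (v - 1)) f) / 2"
  by (subst leftover.simps, subst pmf_expectation_bind[where A = UNIV]) (auto simp: UNIV_bool)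

lemma set_pmf_merge_loop1D:
  "(T', i', c) \<in> set_pmf (merge_loop1 T i j n) \<Longrightarrow> i \<le> j \<Longrightarrow> j \<le> n \<Longrightarrow>
     i \<le> i' \<and> i' \<le> n \<and> c = Suc (i' - i)"
proof (induction T i j n arbitrary: T' i' c rule: merge_loop1.induct)
  case (1 T i j n)
  show ?case
    using "1.prems" "1.IH"[of False] "1.IH"[of True]
    by (subst (asm) merge_loop1.simps) (auto split: if_splits; force)
qed

lemma map_merge_loop1_leftover:
  "i \<le> j \<Longrightarrow> j \<le> n \<Longrightarrow>
     map_pmf (\<lambda>(_, i', _). n - i') (merge_loop1 T i j n) = leftover (j - i) (n - j)"
proof (induction T i j n rule: merge_loop1.induct)
  case (1 T i j n)
  have drop_count: "map_pmf (\<lambda>(_, i', _). m - i') (map_pmf (\<lambda>(T', i', c). (T', i', Suc c)) p) =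
      map_pmf (\<lambda>(_, i', _). m - i') p" for p :: "('a list \<times> nat \<times> nat) pmf" and m
    by (simp add: map_pmf_comp split_def)
  show ?case
    using "1.prems" "1.IH"[of False] "1.IH"[of True]
    by (subst merge_loop1.simps, subst leftover.simps)
       (auto simp: map_bind_pmf drop_count Suc_diff_Suc intro!: bind_pmf_cong)
qed

lemma map_snd_merge_loop2:
  "s \<le> i \<Longrightarrow> map_pmf snd (merge_loop2 T s i n) = return_pmf (\<Sum>t = Suc (i - s)..n - s. unif_cost t)"
proof (induction T s i n rule: merge_loop2.induct)
  case (1 T s i n)
  show ?case
  proof (cases "i < n")
    case True
    let ?rest = "\<Sum>t = Suc (Suc i - s)..n - s. unif_cost t"
    have "map_pmf snd (merge_loop2 T s i n) = pmf_of_set {s..i} \<bind>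
        (\<lambda>m. map_pmf (\<lambda>c. c + unif_cost (card {s..i})) (map_pmf snd (merge_loop2 (swap T i m) s (i + 1) n)))"
      using True by (subst merge_loop2.simps) (simp add: map_bind_pmf map_pmf_comp split_def)
    also have "\<dots> = pmf_of_set {s..i} \<bind> (\<lambda>m. return_pmf (?rest + unif_cost (card {s..i})))"
      using "1.IH"[OF True] "1.prems" by (intro bind_pmf_cong) auto
    also have "?rest + unif_cost (card {s..i}) = (\<Sum>t = Suc (i - s)..n - s. unif_cost t)"
      using True "1.prems" by (simp add: sum.atLeast_Suc_atMost Suc_diff_le)
    finally show ?thesis
      by simp
  next
    case False
    then show ?thesis
      by (subst merge_loop2.simps) simp
  qed
qed

lemma map_snd_merge:
  "map_pmf snd (merge T s n1 n2) =
     map_pmf (\<lambda>d. Suc (n1 + n2 - d) + (\<Sum>t = Suc (n1 + n2 - d)..n1 + n2. unif_cost t)) (leftover n1 n2)"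
    (is "_ = map_pmf ?bits _")
proof -
  define n where "n = s + n1 + n2"
  let ?loop1 = "merge_loop1 T s (s + n1) n"
  have outcome: "map_pmf snd (merge_loop2 T1 s i n \<bind> (\<lambda>(T2, c2). return_pmf (T2, c1 + c2))) =
      return_pmf (?bits (n - i))" if "(T1, i, c1) \<in> set_pmf ?loop1" for T1 i c1
  proof -
    have i: "s \<le> i" "i \<le> n" "c1 = Suc (i - s)"
      using set_pmf_merge_loop1D[OF that] by (auto simp: n_def)
    have "map_pmf snd (merge_loop2 T1 s i n \<bind> (\<lambda>(T2, c2). return_pmf (T2, c1 + c2))) =
        map_pmf (\<lambda>c2. c1 + c2) (map_pmf snd (merge_loop2 T1 s i n))"
      by (simp add: map_bind_pmf map_pmf_def bind_assoc_pmf bind_return_pmf split_def)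
    also have "\<dots> = return_pmf (c1 + (\<Sum>t = Suc (i - s)..n - s. unif_cost t))"
      using i by (simp add: map_snd_merge_loop2)
    also have "c1 + (\<Sum>t = Suc (i - s)..n - s. unif_cost t) = ?bits (n - i)"
      using i by (simp add: n_def)
    finally show ?thesis .
  qed
  have "map_pmf snd (merge T s n1 n2) = ?loop1 \<bind> (\<lambda>(_, i, _). return_pmf (?bits (n - i)))"
    unfolding merge_def n_def[symmetric] map_bind_pmf
    using outcome by (intro bind_pmf_cong) auto
  also have "\<dots> = map_pmf ?bits (map_pmf (\<lambda>(_, i, _). n - i) ?loop1)"
    by (simp add: map_pmf_def bind_assoc_pmf bind_return_pmf split_def)
  also have "\<dots> = map_pmf ?bits (leftover n1 n2)"
    by (simp add: map_merge_loop1_leftover n_def)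
  finally show ?thesis .
qed

lemma expected_bits_leftover:
  "expected_bits T s n1 n2 = measure_pmf.expectation (leftover n1 n2)
     (\<lambda>d. real (Suc (n1 + n2 - d)) + (\<Sum>t = Suc (n1 + n2 - d)..n1 + n2. real (unif_cost t)))"
proof -
  have "expected_bits T s n1 n2 = measure_pmf.expectation (map_pmf snd (merge T s n1 n2)) real"
    by (simp add: expected_bits_def split_def)
  then show ?thesis
    by (simp add: map_snd_merge add.assoc)
qed

lemma leftover_second_moment:
  "measure_pmf.expectation (leftover u v) (\<lambda>d. real d ^ 2) =
     (real u - real v) ^ 2 + real u + real v - 3 * measure_pmf.expectation (leftover u v) real"
proof (induction "u + v" arbitrary: u v rule: less_induct)
  case less
  show ?case
    using less[of "u - 1" v] less[of u "v - 1"]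
    by (subst (1 2) expectation_leftover)
       (cases "u = 0"; cases "v = 0"; simp add: algebra_simps power2_eq_square)
qed

lemma expectation_leftover_le:
  fixes f :: "nat \<Rightarrow> real"
  assumes "\<And>u v. (if u = 0 then f (u + v) else H (u - 1) v) / 2 +
      (if v = 0 then f (u + v) else H u (v - 1)) / 2 \<le> H u v"
  shows "measure_pmf.expectation (leftover u v) f \<le> H u v"
proof (induction "u + v" arbitrary: u v rule: less_induct)
  case less
  have "measure_pmf.expectation (leftover u v) f \<le>
      (if u = 0 then f (u + v) else H (u - 1) v) / 2 + (if v = 0 then f (u + v) else H u (v - 1)) / 2"
    using less[of "u - 1" v] less[of u "v - 1"]
    by (subst expectation_leftover) (cases "u = 0"; cases "v = 0"; simp)
  also have "\<dots> \<le> H u v"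
    by (rule assms)
  finally show ?case .
qed

lemma leftover_fourth_moment_le:
  "measure_pmf.expectation (leftover u v) (\<lambda>d. real d ^ 4) \<le>
     (real u - real v) ^ 4 + 6 * (real u + real v) * (real u - real v) ^ 2 + 3 * (real u + real v) ^ 2"
proof -
  define H :: "real \<Rightarrow> real \<Rightarrow> real"
    where "H x y = (x - y) ^ 4 + 6 * (x + y) * (x - y) ^ 2 + 3 * (x + y) ^ 2" for x y
  have H_step: "(H (x - 1) y + H x (y - 1)) / 2 = H x y - 2" for x y
    unfolding H_def by (simp add: field_simps power2_eq_square power4_eq_xxxx)
  have H_sym: "H x y = H y x" for x y
    unfolding H_def by (simp add: field_simps power2_eq_square power4_eq_xxxx)
  have H_edge: "(w + 1) ^ 4 / 2 + H 0 w / 2 \<le> H 0 (w + 1)" if "0 \<le> w" for w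
    unfolding H_def using that
    by (simp add: field_simps power2_eq_square power3_eq_cube power4_eq_xxxx)
  have "(if u = 0 then real (u + v) ^ 4 else H (real (u - 1)) (real v)) / 2 +
      (if v = 0 then real (u + v) ^ 4 else H (real u) (real (v - 1))) / 2 \<le> H (real u) (real v)" for u v
  proof -
    consider "u = 0" "v = 0" | "u = 0" "v > 0" | "u > 0" "v = 0" | "u > 0" "v > 0"
      by auto
    then show ?thesis
    proof cases
      case 2
      then show ?thesis
        using H_edge[of "real v - 1"] by simp
    next
      case 3
      then show ?thesis
        using H_edge[of "real u - 1"] H_sym[of _ 0] by simp
    next
      case 4
      then show ?thesis
        using H_step[of "real u" "real v"] by simp
    qed (simp add: H_def)
  qed
  then show ?thesis
    using expectation_leftover_le[of "\<lambda>d. real d ^ 4" "\<lambda>u v. H (real u) (real v)"]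
    by (simp add: H_def)
qed

lemma leftover_mean_nonneg: "0 \<le> measure_pmf.expectation (leftover u v) real"
  by (simp add: integral_nonneg)

lemma leftover_mean_le: "measure_pmf.expectation (leftover k k) real \<le> sqrt (2 * real k)"
proof (cases "k = 0")
  case True
  then show ?thesis
    by (subst expectation_leftover) simp
next
  case False
  define A where "A = sqrt (2 * real k)"
  have A: "0 < A" "A ^ 2 = 2 * real k"
    using False by (simp_all add: A_def)
  let ?E = "measure_pmf.expectation (leftover k k)"
  have am_gm: "x \<le> x ^ 2 / (2 * A) + A / 2" for x :: real
  proof -
    have "0 \<le> (x - A) ^ 2 / (2 * A)"
      using A by simp
    also have "\<dots> = x ^ 2 / (2 * A) + A / 2 - x"
      using A by (simp add: field_simps power2_eq_square)
    finally show ?thesis by simp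
  qed
  have "?E real \<le> ?E (\<lambda>d. real d ^ 2 / (2 * A) + A / 2)"
    by (intro integral_mono) (simp_all add: am_gm)
  also have "\<dots> = (2 * real k - 3 * ?E real) / (2 * A) + A / 2"
    by (simp add: leftover_second_moment)
  also have "\<dots> = A - 3 * ?E real / (2 * A)"
    using A by (simp add: A(2)[symmetric] field_simps power2_eq_square)
  also have "\<dots> \<le> A"
    using A leftover_mean_nonneg[of k k] by simp
  finally show ?thesis
    by (simp add: A_def)
qed

lemma leftover_mean_ge:
  assumes "1 \<le> k"
  shows "14 / 45 * sqrt (real k) \<le> measure_pmf.expectation (leftover k k) real"
proof -
  define r where "r = sqrt (real k)"
  have r: "1 \<le> r" "real k = r ^ 2"
    using assms by (simp_all add: r_def)
  let ?E = "measure_pmf.expectation (leftover k k)"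
  txt \<open>The quartic lies below the identity on \<open>[0, \<infinity>)\<close> and touches it at \<open>x = 3r\<close>, on the scale of \<open>d\<close>.\<close>
  have quartic: "x ^ 2 / (2 * r) - x ^ 4 / (54 * r ^ 3) \<le> x" if "0 \<le> x" for x
  proof -
    have "0 \<le> x * (x - 3 * r) ^ 2 * (x + 6 * r) / (54 * r ^ 3)"
      using that r by simp
    also have "\<dots> = x - (x ^ 2 / (2 * r) - x ^ 4 / (54 * r ^ 3))"
      using r by (simp add: field_simps power2_eq_square power3_eq_cube power4_eq_xxxx)
    finally show ?thesis by simp
  qed
  define E where "E = ?E real"
  have "?E (\<lambda>d. real d ^ 2 / (2 * r) - real d ^ 4 / (54 * r ^ 3)) \<le> E"
    unfolding E_def by (intro integral_mono) (simp_all add: quartic)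
  then have "(2 * r ^ 2 - 3 * E) / (2 * r) - ?E (\<lambda>d. real d ^ 4) / (54 * r ^ 3) \<le> E"
    using r by (simp add: leftover_second_moment E_def)
  moreover have "?E (\<lambda>d. real d ^ 4) / (54 * r ^ 3) \<le> 12 * r ^ 4 / (54 * r ^ 3)"
    using leftover_fourth_moment_le[of k k] r
    by (intro divide_right_mono) (simp_all add: power2_eq_square power4_eq_xxxx)
  moreover have "12 * r ^ 4 / (54 * r ^ 3) = 2 * r / 9" "(2 * r ^ 2 - 3 * E) / (2 * r) = r - 3 * E / (2 * r)"
    using r by (simp_all add: field_simps power2_eq_square power3_eq_cube power4_eq_xxxx)
  ultimately have "7 * r / 9 \<le> E + 3 * E / (2 * r)"
    by linarith
  have "5 * r * (14 / 45 * r) = 2 * r * (7 * r / 9)"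
    by simp
  also have "\<dots> \<le> 2 * r * (E + 3 * E / (2 * r))"
    using r \<open>7 * r / 9 \<le> E + 3 * E / (2 * r)\<close> by (intro mult_left_mono) auto
  also have "\<dots> = (2 * r + 3) * E"
    using r by (simp add: field_simps)
  also have "\<dots> \<le> 5 * r * E"
    using r leftover_mean_nonneg[of k k] by (intro mult_right_mono) (auto simp: E_def)
  finally have "14 / 45 * r \<le> E"
    by (rule mult_left_le_imp_le) (use r in auto)
  then show ?thesis
    unfolding E_def r_def .
qed

lemma unif_cost_bounds:
  assumes "1 \<le> K"
  shows "log 2 (real K) \<le> real (unif_cost K)" "real (unif_cost K) \<le> log 2 (real K) + 1"
proof -
  have "real (unif_cost K) = real_of_int \<lceil>log 2 (real K)\<rceil>"
    using assms by (simp add: unif_cost_def)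
  then show "log 2 (real K) \<le> real (unif_cost K)" "real (unif_cost K) \<le> log 2 (real K) + 1"
    by simp_all
qed

lemma sum_unif_cost_bounds:
  assumes "d \<le> N"
  shows "real d * log 2 (real (N - d + 1)) \<le> (\<Sum>t = Suc (N - d)..N. real (unif_cost t))"
    and "(\<Sum>t = Suc (N - d)..N. real (unif_cost t)) \<le> real d * (log 2 (real N) + 1)"
proof -
  have card: "card {Suc (N - d)..N} = d"
    using assms by simp
  have lo: "log 2 (real (N - d + 1)) \<le> real (unif_cost t)" if "t \<in> {Suc (N - d)..N}" for t
  proof -
    have "log 2 (real (N - d + 1)) \<le> log 2 (real t)"
      using that by simp
    also have "\<dots> \<le> real (unif_cost t)"
      using that unif_cost_bounds(1)[of t] by simp
    finally show ?thesis .
  qed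
  show "real d * log 2 (real (N - d + 1)) \<le> (\<Sum>t = Suc (N - d)..N. real (unif_cost t))"
    using sum_bounded_below[of "{Suc (N - d)..N}", OF lo] card by simp
  have hi: "real (unif_cost t) \<le> log 2 (real N) + 1" if "t \<in> {Suc (N - d)..N}" for t
  proof -
    have "real (unif_cost t) \<le> log 2 (real t) + 1"
      using that unif_cost_bounds(2)[of t] by simp
    also have "\<dots> \<le> log 2 (real N) + 1"
      using that by simp
    finally show ?thesis .
  qed
  show "(\<Sum>t = Suc (N - d)..N. real (unif_cost t)) \<le> real d * (log 2 (real N) + 1)"
    using sum_bounded_above[of "{Suc (N - d)..N}", OF hi] card by simp
qed

lemma expected_bits_excess_bounds:
  assumes "1 \<le> k"
  shows "1 + (log 2 (real k + 1) - 1) * (14 / 45 * sqrt (real k)) \<le> expected_bits T s k k - 2 * real k"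
    and "expected_bits T s k k - 2 * real k \<le> 1 + log 2 (2 * real k) * sqrt (2 * real k)"
proof -
  let ?E = "measure_pmf.expectation (leftover k k)"
  let ?cost = "\<lambda>d. \<Sum>t = Suc (2 * k - d)..2 * k. real (unif_cost t)"
  have excess: "expected_bits T s k k - 2 * real k = ?E (\<lambda>d. 1 - real d + ?cost d)"
  proof -
    have "expected_bits T s k k = ?E (\<lambda>d. real (Suc (k + k - d)) + ?cost d)"
      by (simp add: expected_bits_leftover mult_2)
    also have "\<dots> = ?E (\<lambda>d. 2 * real k + (1 - real d + ?cost d))"
      by (intro integral_cong_AE) (auto simp: AE_measure_pmf_iff dest!: set_pmf_leftover)
    finally show ?thesis
      by simp
  qed
  have cost: "real d * log 2 (real k + 1) \<le> ?cost d" "?cost d \<le> real d * (log 2 (2 * real k) + 1)"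
    if "d \<in> set_pmf (leftover k k)" for d
  proof -
    have "d \<le> k"
      using set_pmf_leftover[OF that] by simp
    then have "real d * log 2 (real k + 1) \<le> real d * log 2 (real (2 * k - d + 1))"
      by (intro mult_left_mono) simp_all
    also have "\<dots> \<le> ?cost d"
      using sum_unif_cost_bounds(1)[of d "2 * k"] \<open>d \<le> k\<close> by simp
    finally show "real d * log 2 (real k + 1) \<le> ?cost d" .
    show "?cost d \<le> real d * (log 2 (2 * real k) + 1)"
      using sum_unif_cost_bounds(2)[of d "2 * k"] \<open>d \<le> k\<close> by simp
  qed
  have "1 + (log 2 (real k + 1) - 1) * (14 / 45 * sqrt (real k)) \<le> 1 + (log 2 (real k + 1) - 1) * ?E real"
    using assms leftover_mean_ge[OF assms] by (intro add_left_mono mult_left_mono) auto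
  also have "\<dots> = ?E (\<lambda>d. 1 + (log 2 (real k + 1) - 1) * real d)"
    by simp
  also have "\<dots> \<le> expected_bits T s k k - 2 * real k"
    unfolding excess using cost(1)
    by (intro integral_mono_AE) (auto simp: AE_measure_pmf_iff algebra_simps)
  finally show "1 + (log 2 (real k + 1) - 1) * (14 / 45 * sqrt (real k)) \<le> expected_bits T s k k - 2 * real k" .
  have "expected_bits T s k k - 2 * real k \<le> ?E (\<lambda>d. 1 + log 2 (2 * real k) * real d)"
    unfolding excess using cost(2)
    by (intro integral_mono_AE) (auto simp: AE_measure_pmf_iff algebra_simps)
  also have "\<dots> = 1 + log 2 (2 * real k) * ?E real"
    by simp
  also have "\<dots> \<le> 1 + log 2 (2 * real k) * sqrt (2 * real k)"
    using assms leftover_mean_le[of k] by (intro add_left_mono mult_left_mono) auto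
  finally show "expected_bits T s k k - 2 * real k \<le> 1 + log 2 (2 * real k) * sqrt (2 * real k)" .
qed

lemma bigtheta_sandwich:
  fixes f l u g :: "'a \<Rightarrow> real"
  assumes "eventually (\<lambda>x. 0 \<le> l x \<and> l x \<le> f x \<and> f x \<le> u x) F"
    and "l \<in> \<Omega>[F](g)" and "u \<in> O[F](g)"
  shows "f \<in> \<Theta>[F](g)"
proof (rule bigthetaI)
  have "f \<in> O[F](u)"
    using assms(1) by (intro landau_o.big_mono) (auto elim!: eventually_mono)
  then show "f \<in> O[F](g)"
    using assms(3) by (rule landau_o.big_trans)
  have "f \<in> \<Omega>[F](l)"
    using assms(1) by (intro landau_omega.big_mono) (auto elim!: eventually_mono)
  then show "f \<in> \<Omega>[F](g)"
    using assms(2) by (rule landau_omega.big_trans)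
qed

theorem mainTheorem2:
  fixes T :: "nat \<Rightarrow> 'a list"
  assumes "\<And>k. length (T k) = 2 * k"
  shows "(\<lambda>k. expected_bits (T k) 0 k k - real (2 * k))
           \<in> \<Theta>(\<lambda>k. sqrt (real (2 * k)) * ln (real (2 * k)))"
proof -
  define lower :: "nat \<Rightarrow> real" where "lower k = 1 + (log 2 (real k + 1) - 1) * (14 / 45 * sqrt (real k))" for k
  define upper :: "nat \<Rightarrow> real" where "upper k = 1 + log 2 (2 * real k) * sqrt (2 * real k)" for k
  have "eventually (\<lambda>k. 0 \<le> lower k \<and> lower k \<le> expected_bits (T k) 0 k k - real (2 * k) \<and>
      expected_bits (T k) 0 k k - real (2 * k) \<le> upper k) at_top"
    using eventually_ge_at_top[of 1]
  proof eventually_elim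
    case (elim k)
    then have "0 \<le> log 2 (real k + 1) - 1"
      by simp
    then show ?case
      using expected_bits_excess_bounds[OF elim, of "T k" 0] by (simp add: lower_def upper_def)
  qed
  moreover have "lower \<in> \<Omega>(\<lambda>k. sqrt (real (2 * k)) * ln (real (2 * k)))"
    unfolding lower_def by real_asymp
  moreover have "upper \<in> O(\<lambda>k. sqrt (real (2 * k)) * ln (real (2 * k)))"
    unfolding upper_def by real_asymp
  ultimately show ?thesis
    by (rule bigtheta_sandwich)
qed

end
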